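(* For every integer $n\ge 1$, $\gamma^{DLD}(P_n\square P_2)=n$.
   Context: $P_k$ denotes the path on $k$ vertices. The Cartesian product $G\square H$ has vertex set $V(G)\times V(H)$, with $(u,v)$ adjacent to $(u',v')$ iff either $u=u'$ and $vv'\in E(H)$, or $uu'\in E(G)$ and $v=v'$. For a vertex $u$, $N[u]$ is its closed neighbourhood. A code is a non-empty subset $C$ of the vertex set $V$; $I(C;u)=N[u]\cap C$. A code $C$ is solid-locating-dominating if $I(C;u)\ne\emptyset$ for every $u\in V\setminus C$ and $I(C;u)\not\subseteq I(C;v)$ for all distinct $u,v\in V\setminus C$; $\gamma^{DLD}$ is the minimum size of such a code. *)

theory Defs
  imports Main
begin

definition path_verts :: "nat \<Rightarrow> nat set" where
  "path_verts k = {0..<k}"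

definition path_adj :: "nat \<Rightarrow> nat \<Rightarrow> bool" where
  "path_adj u v \<longleftrightarrow> u = Suc v \<or> v = Suc u"

definition cart_adj :: "('a \<Rightarrow> 'a \<Rightarrow> bool) \<Rightarrow> ('b \<Rightarrow> 'b \<Rightarrow> bool)
    \<Rightarrow> 'a \<times> 'b \<Rightarrow> 'a \<times> 'b \<Rightarrow> bool" where
  "cart_adj EG EH x y \<longleftrightarrow>
     (fst x = fst y \<and> EH (snd x) (snd y)) \<or> (EG (fst x) (fst y) \<and> snd x = snd y)"

definition closed_nbhd :: "'v set \<Rightarrow> ('v \<Rightarrow> 'v \<Rightarrow> bool) \<Rightarrow> 'v \<Rightarrow> 'v set" where
  "closed_nbhd V E u = {v \<in> V. v = u \<or> E u v}"

definition I_code :: "'v set \<Rightarrow> ('v \<Rightarrow> 'v \<Rightarrow> bool) \<Rightarrow> 'v set \<Rightarrow> 'v \<Rightarrow> 'v set" where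
  "I_code V E C u = closed_nbhd V E u \<inter> C"

definition is_solid_LD :: "'v set \<Rightarrow> ('v \<Rightarrow> 'v \<Rightarrow> bool) \<Rightarrow> 'v set \<Rightarrow> bool" where
  "is_solid_LD V E C \<longleftrightarrow> C \<noteq> {} \<and> C \<subseteq> V \<and>
     (\<forall>u \<in> V - C. I_code V E C u \<noteq> {}) \<and>
     (\<forall>u \<in> V - C. \<forall>v \<in> V - C. u \<noteq> v \<longrightarrow> \<not> I_code V E C u \<subseteq> I_code V E C v)"

definition gamma_DLD :: "'v set \<Rightarrow> ('v \<Rightarrow> 'v \<Rightarrow> bool) \<Rightarrow> nat" where
  "gamma_DLD V E = (LEAST k. \<exists>C. is_solid_LD V E C \<and> card C = k)"

end

theory Submission
  imports Defs
begin

text \<open>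
  One row of the ladder \<open>P\<^sub>n \<box> P\<^sub>2\<close> is a solid-locating-dominating code: every vertex of
  the other row sees exactly its own partner in its column.

  For the lower bound we inject the non-code vertices into the code. A non-code vertex whose
  partner in its column is a code vertex is sent to that partner. Otherwise its column is empty;
  domination and separation force a full neighbouring column, and the vertex is sent to the vertex
  in the same row of that column, preferring the right neighbour. Two empty columns could only
  compete for the same full column \<open>c\<close> if they were \<open>c - 1\<close> and \<open>c + 1\<close>, but separating
  \<open>c + 1\<close> from \<open>c - 1\<close> forces column \<open>c + 2\<close> to be full, so \<open>c + 1\<close> chooses its right neighbour.
\<close>

lemma gamma_DLD_eqI:
  assumes "is_solid_LD V E C" and "card C = k"
    and "\<And>C'. is_solid_LD V E C' \<Longrightarrow> k \<le> card C'"
  shows "gamma_DLD V E = k"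
  unfolding gamma_DLD_def
  by (rule Least_equality) (use assms in auto)

lemma solid_LD_dominates:
  assumes "is_solid_LD V E C" and "u \<in> V - C"
  shows "\<exists>c\<in>C. E u c"
proof -
  from assms have "I_code V E C u \<noteq> {}" by (simp add: is_solid_LD_def)
  then obtain c where "c \<in> C" "c = u \<or> E u c" by (auto simp: I_code_def closed_nbhd_def)
  with assms(2) show ?thesis by auto
qed

lemma solid_LD_separates:
  assumes "is_solid_LD V E C" and "u \<in> V - C" and "v \<in> V - C" and "u \<noteq> v"
  shows "\<exists>c\<in>C. E u c \<and> c \<noteq> v \<and> \<not> E v c"
proof -
  from assms have "\<not> I_code V E C u \<subseteq> I_code V E C v" by (simp add: is_solid_LD_def)
  then obtain c where "c \<in> C" "c \<in> V" "c = u \<or> E u c" "c \<noteq> v" "\<not> E v c"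
    by (auto simp: I_code_def closed_nbhd_def)
  with assms(2) show ?thesis by auto
qed

lemma card_le_twice_if_inj_complement:
  assumes "finite V" and "C \<subseteq> V" and "inj_on g (V - C)" and "g ` (V - C) \<subseteq> C"
  shows "card V \<le> 2 * card C"
proof -
  have "finite C" using assms(1,2) by (rule finite_subset[rotated])
  then have "card (V - C) \<le> card C"
    using card_inj_on_le assms(3,4) by blast
  moreover have "card V = card C + card (V - C)"
    using card_Diff_subset[OF \<open>finite C\<close> assms(2)] card_mono[OF assms(1,2)] by simp
  ultimately show ?thesis by simp
qed

abbreviation ladder_verts :: "nat \<Rightarrow> (nat \<times> nat) set" where
  "ladder_verts n \<equiv> path_verts n \<times> path_verts 2"

abbreviation ladder_adj :: "nat \<times> nat \<Rightarrow> nat \<times> nat \<Rightarrow> bool" where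
  "ladder_adj \<equiv> cart_adj path_adj path_adj"

lemma ladder_adj_iff:
  assumes "b < 2" and "y < 2"
  shows "ladder_adj (a, b) (x, y) \<longleftrightarrow> (x = a \<and> y = 1 - b) \<or> ((x = Suc a \<or> a = Suc x) \<and> y = b)"
  using assms by (auto simp: cart_adj_def path_adj_def)

lemma card_ladder_verts: "card (ladder_verts n) = 2 * n"
  by (simp add: path_verts_def card_cartesian_product)

lemma I_code_bottom_row:
  assumes "a < n"
  shows "I_code (ladder_verts n) ladder_adj ({0..<n} \<times> {0}) (a, Suc 0) = {(a, 0)}"
proof (rule set_eqI)
  fix z show "z \<in> I_code (ladder_verts n) ladder_adj ({0..<n} \<times> {0}) (a, Suc 0) \<longleftrightarrow> z \<in> {(a, 0)}"
  using assms by (cases z) (auto simp: I_code_def closed_nbhd_def path_verts_def cart_adj_def path_adj_def)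
qed

lemma ladder_minus_bottom_row: "ladder_verts n - {0..<n} \<times> {0} = {0..<n} \<times> {1}"
  by (auto simp: path_verts_def)

lemma bottom_row_solid_LD:
  assumes "n \<ge> 1"
  shows "is_solid_LD (ladder_verts n) ladder_adj ({0..<n} \<times> {0})"
  unfolding is_solid_LD_def ladder_minus_bottom_row
  using assms by (auto simp: I_code_bottom_row) (auto simp: path_verts_def)

locale ladder_code =
  fixes n :: nat and C :: "(nat \<times> nat) set"
  assumes solid: "is_solid_LD (ladder_verts n) ladder_adj C"
begin

definition empty_col :: "nat \<Rightarrow> bool" where
  "empty_col i \<longleftrightarrow> (i, 0) \<notin> C \<and> (i, 1) \<notin> C"

definition full_col :: "nat \<Rightarrow> bool" where
  "full_col i \<longleftrightarrow> (i, 0) \<in> C \<and> (i, 1) \<in> C"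

lemma code_in_ladder: "C \<subseteq> ladder_verts n"
  using solid by (simp add: is_solid_LD_def)

lemma code_bounds: "(x, y) \<in> C \<Longrightarrow> x < n \<and> y < 2"
  using code_in_ladder by (auto simp: path_verts_def)

lemma dominated:
  assumes "a < n" and "b < 2" and "(a, b) \<notin> C"
  shows "(a, 1 - b) \<in> C \<or> (Suc a, b) \<in> C \<or> (\<exists>a'. a = Suc a' \<and> (a', b) \<in> C)"
proof -
  have "(a, b) \<in> ladder_verts n - C" using assms by (simp add: path_verts_def)
  then obtain x y where xy: "(x, y) \<in> C" "ladder_adj (a, b) (x, y)"
    using solid_LD_dominates[OF solid] by fast
  with code_bounds have "y < 2" by blast
  with xy show ?thesis using ladder_adj_iff[OF assms(2)] by auto
qed

text \<open>
  Of the three neighbours of \<open>(a + 1, b)\<close>, the partner is not a code vertex and \<open>(a, b)\<close> is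
  seen by \<open>v\<close>, so only \<open>(a + 2, b)\<close> can separate \<open>(a + 1, b)\<close> from \<open>v\<close>.
\<close>

lemma separation_forces_right:
  assumes "Suc a < n" and "b < 2" and "(Suc a, b) \<notin> C" and "(Suc a, 1 - b) \<notin> C"
    and "v \<in> ladder_verts n - C" and "v \<noteq> (Suc a, b)" and "ladder_adj v (a, b)"
  shows "(Suc (Suc a), b) \<in> C"
proof -
  have "(Suc a, b) \<in> ladder_verts n - C" using assms(1-3) by (simp add: path_verts_def)
  then obtain x y where xy: "(x, y) \<in> C" "ladder_adj (Suc a, b) (x, y)"
      "(x, y) \<noteq> v" "\<not> ladder_adj v (x, y)"
    using solid_LD_separates[OF solid _ assms(5) assms(6)[symmetric]] by fast
  from xy code_bounds have "y < 2" by blast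
  with xy(2) consider "(x, y) = (Suc a, 1 - b)" | "(x, y) = (Suc (Suc a), b)" | "(x, y) = (a, b)"
    using ladder_adj_iff[OF assms(2)] by fastforce
  then show ?thesis
  proof cases
    case 1 with xy(1) assms(4) show ?thesis by simp
  next
    case 2 with xy(1) show ?thesis by simp
  next
    case 3 with xy(4) assms(7) show ?thesis by simp
  qed
qed

lemma empty_col_has_full_neighbour:
  assumes "i < n" and "empty_col i"
  shows "full_col (Suc i) \<or> (\<exists>j. i = Suc j \<and> full_col j)"
proof (cases i)
  case 0
  with assms dominated[of 0 0] dominated[of 0 1] show ?thesis
    by (auto simp: empty_col_def full_col_def)
next
  case (Suc j)
  have "j < n" using assms(1) Suc by simp
  have left_or_right: "(j, b) \<in> C \<or> (Suc i, b) \<in> C" if "b < 2" for b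
    using dominated[of i b] assms that Suc by (auto simp: empty_col_def less_2_cases_iff)
  have right: "(Suc i, b) \<in> C" if "b < 2" and "(j, 1 - b) \<notin> C" for b
  proof (rule separation_forces_right[of j b "(j, 1 - b)", folded Suc])
    show "(j, 1 - b) \<in> ladder_verts n - C"
      using \<open>j < n\<close> that by (simp add: path_verts_def)
    show "ladder_adj (j, 1 - b) (j, b)"
      using that by (auto simp: cart_adj_def path_adj_def less_2_cases_iff)
  qed (use assms that Suc in \<open>auto simp: empty_col_def less_2_cases_iff\<close>)
  show ?thesis
    using left_or_right[of 0] left_or_right[of 1] right[of 0] right[of 1] Suc
    by (auto simp: full_col_def)
qed

lemma empty_cols_two_apart_force_full:
  assumes "Suc (Suc a) < n" and "empty_col a" and "empty_col (Suc (Suc a))"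
  shows "full_col (Suc (Suc (Suc a)))"
proof -
  have "(Suc (Suc (Suc a)), b) \<in> C" if "b < 2" for b
  proof (rule separation_forces_right[of "Suc a" b "(a, b)"])
    show "(a, b) \<in> ladder_verts n - C"
      using assms that by (auto simp: path_verts_def empty_col_def less_2_cases_iff)
    show "ladder_adj (a, b) (Suc a, b)" by (simp add: cart_adj_def path_adj_def)
  qed (use assms that in \<open>auto simp: empty_col_def less_2_cases_iff\<close>)
  then show ?thesis by (simp add: full_col_def)
qed

definition host_col :: "nat \<Rightarrow> nat" where
  "host_col i = (if full_col (Suc i) then Suc i else i - 1)"

lemma host_col_full:
  assumes "i < n" and "empty_col i"
  shows "full_col (host_col i)"
  using empty_col_has_full_neighbour[OF assms] by (auto simp: host_col_def)

lemma host_col_less_neq: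
  assumes "i < i'" and "i' < n" and "empty_col i" and "empty_col i'"
  shows "host_col i \<noteq> host_col i'"
proof
  assume same: "host_col i = host_col i'"
  have "0 < i \<or> full_col (Suc i)"
    using empty_col_has_full_neighbour[of i] assms by auto
  with same have "\<not> full_col (Suc i')" and "full_col (Suc i)" and "i' = Suc (Suc i)"
    using assms(1) by (auto simp: host_col_def split: if_splits)
  then show False
    using empty_cols_two_apart_force_full[of i] assms by simp
qed

lemma inj_on_host_col: "inj_on host_col {i. i < n \<and> empty_col i}"
  by (rule inj_onI) (metis (mono_tags, lifting) host_col_less_neq linorder_neqE_nat mem_Collect_eq)

definition code_partner :: "nat \<times> nat \<Rightarrow> nat \<times> nat" where
  "code_partner u =
     (if (fst u, 1 - snd u) \<in> C then (fst u, 1 - snd u) else (host_col (fst u), snd u))"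

lemma empty_col_if_partner_not_code:
  assumes "(a, b) \<in> ladder_verts n - C" and "(a, 1 - b) \<notin> C"
  shows "a < n" and "empty_col a"
  using assms by (auto simp: path_verts_def empty_col_def less_2_cases_iff)

lemma code_partner_in_code:
  assumes ab: "(a, b) \<in> ladder_verts n - C"
  shows "code_partner (a, b) \<in> C"
proof (cases "(a, 1 - b) \<in> C")
  case False
  with ab have "full_col (host_col a)"
    using host_col_full empty_col_if_partner_not_code by blast
  with ab False show ?thesis
    by (auto simp: code_partner_def full_col_def path_verts_def less_2_cases_iff)
qed (simp add: code_partner_def)

lemma code_partner_eqD:
  assumes ab: "(a, b) \<in> ladder_verts n - C" and ab': "(a', b') \<in> ladder_verts n - C"
    and eq: "code_partner (a, b) = code_partner (a', b')"
  shows "(a, b) = (a', b')"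
proof -
  have host_full: "full_col (host_col i)"
    if "(i, j) \<in> ladder_verts n - C" and "(i, 1 - j) \<notin> C" for i j
    using host_col_full[OF empty_col_if_partner_not_code[OF that]] .
  consider "(a, 1 - b) \<in> C" "(a', 1 - b') \<in> C"
    | "(a, 1 - b) \<notin> C" "(a', 1 - b') \<notin> C"
    | "((a, 1 - b) \<in> C) \<noteq> ((a', 1 - b') \<in> C)" by blast
  then show ?thesis
  proof cases
    case 1
    with eq ab ab' show ?thesis by (auto simp: code_partner_def path_verts_def less_2_cases_iff)
  next
    case 2
    with eq have "host_col a = host_col a'" "b = b'" by (simp_all add: code_partner_def)
    moreover have "a \<in> {i. i < n \<and> empty_col i}" "a' \<in> {i. i < n \<and> empty_col i}"
      using empty_col_if_partner_not_code 2 ab ab' by blast+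
    ultimately show ?thesis using inj_on_host_col by (auto dest: inj_onD)
  next
    case 3
    with eq ab ab' host_full[OF ab] host_full[OF ab'] show ?thesis
      by (auto simp: code_partner_def full_col_def path_verts_def less_2_cases_iff)
  qed
qed

lemma inj_on_code_partner: "inj_on code_partner (ladder_verts n - C)"
  by (rule inj_onI) (use code_partner_eqD in fastforce)

lemma code_partner_into_code: "code_partner ` (ladder_verts n - C) \<subseteq> C"
  using code_partner_in_code by fastforce

theorem card_code_ge: "n \<le> card C"
proof -
  have "card (ladder_verts n) \<le> 2 * card C"
    by (rule card_le_twice_if_inj_complement[OF _ code_in_ladder inj_on_code_partner
          code_partner_into_code]) (simp add: path_verts_def)
  then show ?thesis by (simp add: card_ladder_verts)
qed

end

theorem mainTheorem18:
  fixes n :: nat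
  assumes "n \<ge> 1"
  shows "gamma_DLD (path_verts n \<times> path_verts 2) (cart_adj path_adj path_adj) = n"
proof (rule gamma_DLD_eqI)
  show "is_solid_LD (ladder_verts n) ladder_adj ({0..<n} \<times> {0})"
    using assms by (rule bottom_row_solid_LD)
  show "card ({0..<n} \<times> {0 :: nat}) = n"
    by (simp add: card_cartesian_product)
  show "n \<le> card C" if "is_solid_LD (ladder_verts n) ladder_adj C" for C
    using that by (rule ladder_code.card_code_ge[OF ladder_code.intro])
qed

end
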